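(* The periodic points of $\Phi_{\mathrm{Id}}\colon\mathcal{M}(2;\mathbb{C})\to\mathcal{M}(2;\mathbb{C})$, $\mathrm{M}\mapsto\mathrm{M}^2$, other than the zero matrix $\mathbf{0}$, are contained in the boundary $\partial\mathrm{W}^s_{\mathrm{Id}}(\mathbf{0})$ of the basin of attraction of $\mathbf{0}$.
   Context: $\mathrm{W}^s_{\mathrm{Id}}(\mathbf{0})=\{\mathrm{M}\in\mathcal{M}(2;\mathbb{C}):\Phi_{\mathrm{Id}}^k(\mathrm{M})\to\mathbf{0}\text{ as }k\to\infty\}$. A point is periodic if $\Phi_{\mathrm{Id}}^k(\mathrm{M})=\mathrm{M}$ for some $k\geq1$. *)

theory Defs
  imports "HOL-Analysis.Analysis"
begin

type_synonym cmat2 = "complex ^ 2 ^ 2"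

definition Phi_Id :: "cmat2 \<Rightarrow> cmat2" where
  "Phi_Id M = M ** M"

definition Ws_Id_zero :: "cmat2 set" where
  "Ws_Id_zero = {M. (\<lambda>k. (Phi_Id ^^ k) M) \<longlonglongrightarrow> 0}"

definition periodic_point :: "('a \<Rightarrow> 'a) \<Rightarrow> 'a \<Rightarrow> bool" where
  "periodic_point f x \<longleftrightarrow> (\<exists>k\<ge>1. (f ^^ k) x = x)"

end

theory Submission
  imports Defs
begin

text \<open>A periodic orbit is finite, hence bounded, and it cannot converge unless it is constant.
  Squaring is homogeneous of degree 2, so the orbit of \<open>c *\<^sub>R M\<close> is the orbit of \<open>M\<close>
  damped by the factors \<open>c ^ 2 ^ n\<close>; for \<open>\<bar>c\<bar> < 1\<close> it therefore tends to \<open>0\<close>. Hence the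
  open segment from \<open>0\<close> to a nonzero periodic point \<open>M\<close> lies in the basin, whose closure
  thus contains \<open>M\<close>, while \<open>M\<close> itself is not in the basin.\<close>

lemma periodic_orbit_finite:
  assumes "periodic_point f x"
  shows "finite (range (\<lambda>n. (f ^^ n) x))"
proof -
  obtain k where k: "k \<ge> 1" "(f ^^ k) x = x"
    using assms unfolding periodic_point_def by blast
  have "(f ^^ n) x \<in> (\<lambda>n. (f ^^ n) x) ` {..<k}" for n
    using funpow_mod_eq[OF k(2), of n] k(1) by (intro image_eqI[of _ _ "n mod k"]) auto
  then have "range (\<lambda>n. (f ^^ n) x) \<subseteq> (\<lambda>n. (f ^^ n) x) ` {..<k}"
    by blast
  then show ?thesis
    by (rule finite_subset) simp
qed

lemma periodic_orbit_tendsto_imp_eq: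
  fixes x :: "'a::t2_space"
  assumes "periodic_point f x" and "(\<lambda>n. (f ^^ n) x) \<longlonglongrightarrow> L"
  shows "x = L"
proof -
  obtain k where k: "k \<ge> 1" "(f ^^ k) x = x"
    using assms(1) unfolding periodic_point_def by blast
  have "strict_mono (\<lambda>q. q * k)"
    using k(1) by (simp add: strict_mono_def)
  from LIMSEQ_subseq_LIMSEQ[OF assms(2) this]
  have "(\<lambda>q. (f ^^ (q * k)) x) \<longlonglongrightarrow> L"
    by (simp add: o_def)
  moreover have "(f ^^ (q * k)) x = x" for q
    using funpow_mod_eq[OF k(2), of "q * k"] by simp
  ultimately have "(\<lambda>q. x) \<longlonglongrightarrow> L"
    by simp
  then show ?thesis
    using LIMSEQ_const_iff by blast
qed

lemma matrix_mult_scaleR: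
  fixes A :: "'a::real_algebra_1 ^ 'n ^ 'm" and B :: "'a ^ 'p ^ 'n"
  shows "(c *\<^sub>R A) ** (d *\<^sub>R B) = (c * d) *\<^sub>R (A ** B)"
  by (simp add: vec_eq_iff matrix_matrix_mult_def scaleR_sum_right mult.commute)

lemma Phi_Id_funpow_scaleR:
  "(Phi_Id ^^ n) (c *\<^sub>R M) = (c ^ 2 ^ n) *\<^sub>R (Phi_Id ^^ n) M"
  by (induction n) (simp_all add: Phi_Id_def matrix_mult_scaleR power_add [symmetric] mult_2)

lemma scaleR_in_Ws_Id_zero:
  assumes "bounded (range (\<lambda>n. (Phi_Id ^^ n) M))" and "\<bar>c\<bar> < 1"
  shows "c *\<^sub>R M \<in> Ws_Id_zero"
proof -
  obtain B where B: "\<And>n. norm ((Phi_Id ^^ n) M) \<le> B"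
    using assms(1) unfolding bounded_iff by blast
  have dominated: "norm ((c ^ 2 ^ n) *\<^sub>R (Phi_Id ^^ n) M) \<le> \<bar>c\<bar> ^ n * B" for n
  proof -
    have "\<bar>c\<bar> ^ 2 ^ n \<le> \<bar>c\<bar> ^ n"
      using assms(2) by (intro power_decreasing) auto
    then have "\<bar>c\<bar> ^ 2 ^ n * norm ((Phi_Id ^^ n) M) \<le> \<bar>c\<bar> ^ n * B"
      using B[of n] by (intro mult_mono) auto
    then show ?thesis
      by (simp add: power_abs)
  qed
  have geometric: "(\<lambda>n. \<bar>c\<bar> ^ n * B) \<longlonglongrightarrow> 0"
    using assms(2) by (intro tendsto_mult_left_zero LIMSEQ_power_zero) auto
  have "(\<lambda>n. (c ^ 2 ^ n) *\<^sub>R (Phi_Id ^^ n) M) \<longlonglongrightarrow> 0"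
    by (rule Lim_null_comparison[OF always_eventually]) (use dominated geometric in auto)
  then show ?thesis
    unfolding Ws_Id_zero_def by (simp add: Phi_Id_funpow_scaleR)
qed

lemma open_segment_subset_Ws_Id_zero:
  assumes "bounded (range (\<lambda>n. (Phi_Id ^^ n) M))"
  shows "open_segment 0 M \<subseteq> Ws_Id_zero"
  using scaleR_in_Ws_Id_zero[OF assms] by (auto simp: in_segment)

theorem proposition3p3:
  fixes M :: cmat2
  assumes "periodic_point Phi_Id M" and "M \<noteq> 0"
  shows "M \<in> frontier Ws_Id_zero"
proof -
  have "bounded (range (\<lambda>n. (Phi_Id ^^ n) M))"
    using periodic_orbit_finite[OF assms(1)] by blast
  then have "closure (open_segment 0 M) \<subseteq> closure Ws_Id_zero"
    by (intro closure_mono open_segment_subset_Ws_Id_zero)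
  then have "M \<in> closure Ws_Id_zero"
    using assms(2) by auto
  moreover have "M \<notin> Ws_Id_zero"
    using periodic_orbit_tendsto_imp_eq[OF assms(1)] assms(2)
    unfolding Ws_Id_zero_def by blast
  ultimately show ?thesis
    unfolding frontier_def using interior_subset by blast
qed

end
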